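(* Let $r\ge 2$, $k\ge 3$, $m\ge 2$ be integers. (1) If there is a coloring of $\mathbb{Z}_m$ with $r$ colors containing no nontrivial monochromatic $k$-AP, then there is a constant $C$ (depending on $m,k$) such that for every $n$ there is a coloring of $[n]$ with $r$ colors whose number $N$ of monochromatic $k$-APs satisfies $\left|N-\frac{1}{2m(k-1)}n^2\right|\le Cn$. (2) If there is a coloring of $\mathbb{Z}_m\setminus\{0\}$ with $r$ colors such that, for each of the $r$ possible choices of color for $0$, the resulting coloring of $\mathbb{Z}_m$ contains no nontrivial monochromatic $k$-AP, then there is a constant $C$ (depending on $m,k$) such that for every $n$ there is a coloring of $[n]$ with $r$ colors whose number $N$ of monochromatic $k$-APs satisfies $\left|N-\frac{1}{2(m+1)(k-1)}n^2\right|\le Cn$.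
   Context: A $k$-AP in $[n]=\{1,\ldots,n\}$ is a sequence $a,a+d,\ldots,a+(k-1)d$ of elements of $[n]$ with integer $d\ge 1$. A $k$-AP in $\mathbb{Z}_m$ is a sequence $a,a+d,\ldots,a+(k-1)d$ with $a,d\in\mathbb{Z}_m$ (arithmetic mod $m$); it is trivial if $d\equiv 0\pmod m$ (i.e., all terms are equal) and nontrivial otherwise. A progression is monochromatic if all its terms receive the same color. *)

theory Defs
  imports Complex_Main
begin

text \<open>Colorings of Z_m are functions on the representatives 0..m-1; colors are 0..r-1.
  The k-AP a, a+d, ..., a+(k-1)d in Z_m has terms (a + i*d) mod m, with a, d in 0..m-1;
  it is nontrivial iff d is nonzero mod m.\<close>

definition no_nontriv_mono_AP_Zm :: "nat \<Rightarrow> nat \<Rightarrow> (nat \<Rightarrow> nat) \<Rightarrow> bool" where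
  "no_nontriv_mono_AP_Zm m k f \<longleftrightarrow>
     \<not> (\<exists>a<m. \<exists>d<m. d \<noteq> 0 \<and>
           (\<forall>i<k. \<forall>j<k. f ((a + i * d) mod m) = f ((a + j * d) mod m)))"

definition mono_AP_count :: "nat \<Rightarrow> nat \<Rightarrow> (nat \<Rightarrow> nat) \<Rightarrow> nat" where
  "mono_AP_count n k g = card {(a, d). 1 \<le> a \<and> 1 \<le> d \<and> a + (k - 1) * d \<le> n \<and>
       (\<forall>i<k. \<forall>j<k. g (a + i * d) = g (a + j * d))}"

end

theory Submission
  imports Defs
begin

text \<open>
  Part (1): colour \<open>x\<close> by \<open>f (x mod m)\<close>. A progression of step \<open>d\<close> in \<open>[n]\<close> reduces mod \<open>m\<close> to a
  progression of \<open>\<int>\<^sub>m\<close>, which is nontrivial unless \<open>m\<close> divides \<open>d\<close>; so the monochromatic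
  progressions are exactly those with \<open>m | d\<close>, and there are \<open>n\<^sup>2 / (2m(k-1)) + O(n)\<close> of them.

  Part (2): colour \<open>x\<close> by \<open>f\<close> of its last nonzero digit in base \<open>m\<close>. A monochromatic progression
  again has \<open>m | d\<close>, since otherwise it would be monochromatic mod \<open>m\<close> once \<open>0\<close> gets the common
  colour. Among those with \<open>m | d\<close>, the ones with \<open>m \<nmid> a\<close> are all monochromatic, and those with
  \<open>m | a\<close> are the \<open>m\<close>-fold dilates of progressions in \<open>[n div m]\<close>, monochromatic iff the
  original is. Hence \<open>N(n) - N(n div m) = n\<^sup>2/(2m(k-1)) - (n/m)\<^sup>2/(2(k-1)) + O(n)\<close>, and induction on
  \<open>n\<close> shows that \<open>n\<^sup>2/(2(m+1)(k-1))\<close>, which satisfies this recurrence up to an error in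
  \<open>[0, n]\<close>, approximates \<open>N(n)\<close> within \<open>O(n)\<close>.
\<close>

definition progressions :: "nat \<Rightarrow> nat \<Rightarrow> (nat \<times> nat) set" where
  "progressions L n = {(a, d). 1 \<le> a \<and> 1 \<le> d \<and> a + L * d \<le> n}"

definition monochromatic_AP :: "(nat \<Rightarrow> nat) \<Rightarrow> nat \<Rightarrow> nat \<Rightarrow> nat \<Rightarrow> bool" where
  "monochromatic_AP g k a d \<longleftrightarrow> (\<forall>i<k. \<forall>j<k. g (a + i * d) = g (a + j * d))"

lemma mono_AP_count_eq:
  "mono_AP_count n k g = card {(a, d) \<in> progressions (k - 1) n. monochromatic_AP g k a d}"
  unfolding mono_AP_count_def progressions_def monochromatic_AP_def by (rule arg_cong[where f=card]) auto

lemma progressions_0 [simp]: "progressions L 0 = {}"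
  unfolding progressions_def by auto

lemma progressions_subset:
  assumes "L \<ge> 1" shows "progressions L n \<subseteq> {..n} \<times> {..n}"
proof
  fix p assume "p \<in> progressions L n"
  then obtain a d where p: "p = (a, d)" and "a + L * d \<le> n" unfolding progressions_def by blast
  moreover have "d \<le> L * d" using assms by simp
  ultimately have "a \<le> n" "d \<le> n" by linarith+
  then show "p \<in> {..n} \<times> {..n}" using p by simp
qed

lemma finite_progressions: "L \<ge> 1 \<Longrightarrow> finite (progressions L n)"
  by (rule finite_subset[OF progressions_subset]) auto

lemma card_progressions_Suc:
  assumes "L \<ge> 1"
  shows "card (progressions L (Suc n)) = card (progressions L n) + n div L"
proof -
  let ?new = "(\<lambda>t. (Suc n - L * t, t)) ` {1..n div L}"
  have le_div: "t \<le> n div L \<longleftrightarrow> L * t \<le> n" for t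
    using assms by (simp add: less_eq_div_iff_mult_less_eq mult.commute)
  have "progressions L (Suc n) = progressions L n \<union> ?new"
    unfolding progressions_def by (auto simp: le_div image_iff)
  moreover have "progressions L n \<inter> ?new = {}"
    unfolding progressions_def by (auto simp: le_div)
  moreover have "card ?new = n div L"
    by (subst card_image) (auto simp: inj_on_def)
  ultimately show ?thesis
    using finite_progressions[OF assms] by (simp add: card_Un_disjoint)
qed

lemma real_of_nat_div_ge: "real n / real L - 1 \<le> real (n div L)"
proof (cases "L = 0")
  case False
  then have "real (n mod L) / real L \<le> 1" by simp
  then show ?thesis using of_nat_of_nat_div_aux[where 'a=real, of n L] by linarith
qed simp

lemma card_progressions_bounds:
  assumes "L \<ge> 1"
  shows "real n * (real n - 1) / (2 * L) - n \<le> card (progressions L n) \<and>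
         card (progressions L n) \<le> real n * (real n - 1) / (2 * L)"
proof (induction n)
  case 0
  then show ?case by simp
next
  case (Suc n)
  have "real (Suc n) * (real (Suc n) - 1) / (2 * L) = real n * (real n - 1) / (2 * L) + real n / L"
    using assms by (simp add: field_simps)
  moreover have "real n / L - 1 \<le> real (n div L)" "real (n div L) \<le> real n / L"
    using real_of_nat_div_ge of_nat_div_le_of_nat by blast+
  ultimately show ?case using Suc card_progressions_Suc[OF assms, of n] by simp
qed

lemma card_progressions_approx:
  assumes "L \<ge> 1"
  shows "\<bar>card (progressions L n) - (real n)\<^sup>2 / (2 * real L)\<bar> \<le> 2 * real n"
proof -
  have "real n * (real n - 1) / (2 * L) = (real n)\<^sup>2 / (2 * L) - real n / (2 * L)"
    using assms by (simp add: field_simps power2_eq_square)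
  moreover have "0 \<le> real n / (2 * L)" "real n / (2 * L) \<le> real n"
    using assms by (auto simp: divide_le_eq mult_le_cancel_left1)
  ultimately show ?thesis using card_progressions_bounds[OF assms, of n] unfolding abs_le_iff by linarith
qed

lemma card_progressions_dvd_step:
  assumes "m \<ge> 1"
  shows "card {(a, d) \<in> progressions L n. m dvd d} = card (progressions (L * m) n)"
proof -
  have "{(a, d) \<in> progressions L n. m dvd d} = (\<lambda>(a, t). (a, m * t)) ` progressions (L * m) n"
  proof (intro subset_antisym subsetI)
    fix p assume "p \<in> {(a, d) \<in> progressions L n. m dvd d}"
    then obtain a t where "p = (a, m * t)" "(a, t) \<in> progressions (L * m) n"
      unfolding progressions_def by (auto simp: mult.assoc elim!: dvdE)
    then show "p \<in> (\<lambda>(a, t). (a, m * t)) ` progressions (L * m) n" by force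
  qed (use assms in \<open>auto simp: progressions_def mult.assoc\<close>)
  moreover have "inj_on (\<lambda>(a, t). (a, m * t)) (progressions (L * m) n)"
    using assms by (auto simp: inj_on_def)
  ultimately show ?thesis by (simp add: card_image)
qed

lemma card_progressions_dilate:
  assumes "m \<ge> 1"
  shows "card {(a, d) \<in> progressions L n. m dvd a \<and> m dvd d \<and> Q (a div m) (d div m)}
       = card {(s, t) \<in> progressions L (n div m). Q s t}"
proof -
  have le_div: "m * x \<le> n \<longleftrightarrow> x \<le> n div m" for x
    using assms by (simp add: less_eq_div_iff_mult_less_eq mult.commute)
  have "{(a, d) \<in> progressions L n. m dvd a \<and> m dvd d \<and> Q (a div m) (d div m)}
      = (\<lambda>(s, t). (m * s, m * t)) ` {(s, t) \<in> progressions L (n div m). Q s t}"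
  proof (intro subset_antisym subsetI)
    fix p assume "p \<in> {(a, d) \<in> progressions L n. m dvd a \<and> m dvd d \<and> Q (a div m) (d div m)}"
    then obtain s t where "p = (m * s, m * t)" "1 \<le> s" "1 \<le> t" "m * (s + L * t) \<le> n" "Q s t"
      using assms unfolding progressions_def by (auto simp: algebra_simps elim!: dvdE)
    then show "p \<in> (\<lambda>(s, t). (m * s, m * t)) ` {(s, t) \<in> progressions L (n div m). Q s t}"
      unfolding progressions_def le_div by force
  next
    fix p assume "p \<in> (\<lambda>(s, t). (m * s, m * t)) ` {(s, t) \<in> progressions L (n div m). Q s t}"
    then obtain s t where "p = (m * s, m * t)" "1 \<le> s" "1 \<le> t" "m * (s + L * t) \<le> n" "Q s t"
      unfolding progressions_def le_div by auto
    then show "p \<in> {(a, d) \<in> progressions L n. m dvd a \<and> m dvd d \<and> Q (a div m) (d div m)}"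
      using assms unfolding progressions_def by (auto simp: algebra_simps)
  qed
  moreover have "inj_on (\<lambda>(s, t). (m * s, m * t)) X" for X
    using assms by (auto simp: inj_on_def)
  ultimately show ?thesis by (simp add: card_image)
qed

lemma no_nontriv_mono_AP_ZmD:
  assumes "no_nontriv_mono_AP_Zm m k f" "m \<ge> 1" "\<not> m dvd d"
  shows "\<exists>i<k. \<exists>j<k. f ((a + i * d) mod m) \<noteq> f ((a + j * d) mod m)"
proof -
  have reduce: "(a + i * d) mod m = (a mod m + i * (d mod m)) mod m" for i
    by (metis mod_add_eq mod_mult_right_eq mod_mod_trivial)
  have "a mod m < m" "d mod m < m" "d mod m \<noteq> 0"
    using assms(2,3) by (auto simp: mod_eq_0_iff_dvd)
  then have "\<exists>i<k. \<exists>j<k. f ((a mod m + i * (d mod m)) mod m) \<noteq> f ((a mod m + j * (d mod m)) mod m)"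
    using assms(1) unfolding no_nontriv_mono_AP_Zm_def by blast
  then show ?thesis by (simp only: reduce)
qed

lemma mod_add_mult_dvd:
  fixes a d i m :: nat
  assumes "m dvd d" shows "(a + i * d) mod m = a mod m"
proof -
  obtain t where "d = m * t" using assms by (rule dvdE)
  then have "a + i * d = a + (i * t) * m" by (simp add: algebra_simps)
  then show ?thesis by (metis mod_mult_self1)
qed

lemma monochromatic_mod_coloring_iff:
  assumes "no_nontriv_mono_AP_Zm m k f" "m \<ge> 1"
  shows "monochromatic_AP (\<lambda>x. f (x mod m)) k a d \<longleftrightarrow> m dvd d"
proof
  show "m dvd d" if "monochromatic_AP (\<lambda>x. f (x mod m)) k a d"
    using that no_nontriv_mono_AP_ZmD[OF assms] unfolding monochromatic_AP_def by blast
  show "monochromatic_AP (\<lambda>x. f (x mod m)) k a d" if "m dvd d"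
    using mod_add_mult_dvd[OF that] unfolding monochromatic_AP_def by simp
qed

lemma mono_AP_count_mod_coloring:
  assumes "no_nontriv_mono_AP_Zm m k f" "m \<ge> 1"
  shows "mono_AP_count n k (\<lambda>x. f (x mod m)) = card (progressions ((k - 1) * m) n)"
  unfolding mono_AP_count_eq monochromatic_mod_coloring_iff[OF assms]
  by (rule card_progressions_dvd_step[OF assms(2)])

lemma mono_AP_count_mod_coloring_approx:
  assumes "no_nontriv_mono_AP_Zm m k f" "m \<ge> 1" "k \<ge> 2"
  shows "\<bar>mono_AP_count n k (\<lambda>x. f (x mod m)) - (real n)\<^sup>2 / (2 * real m * (real k - 1))\<bar> \<le> 2 * real n"
proof -
  have L: "(k - 1) * m \<ge> 1" using assms by simp
  have "real (k - 1) = real k - 1" using assms(3) by (simp add: of_nat_diff)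
  then show ?thesis
    using mono_AP_count_mod_coloring[OF assms(1,2)] card_progressions_approx[OF L, of n]
    by (simp add: ac_simps)
qed

function last_nonzero_digit_coloring :: "nat \<Rightarrow> (nat \<Rightarrow> nat) \<Rightarrow> nat \<Rightarrow> nat" where
  "last_nonzero_digit_coloring m f x =
     (if x = 0 \<or> m < 2 then 0
      else if x mod m \<noteq> 0 then f (x mod m)
      else last_nonzero_digit_coloring m f (x div m))"
  by auto
termination by (relation "measure (\<lambda>(m, f, x). x)") auto

declare last_nonzero_digit_coloring.simps [simp del]

lemma last_nonzero_digit_coloring_less:
  assumes "\<forall>x\<in>{1..<m}. f x < r" "0 < r"
  shows "last_nonzero_digit_coloring m f x < r"
proof (induction x rule: less_induct)
  case (less x)
  show ?case
  proof (cases "x = 0 \<or> m < 2")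
    case True
    then show ?thesis using assms(2) by (simp add: last_nonzero_digit_coloring.simps)
  next
    case False
    then have "x div m < x" "x mod m < m" by auto
    then show ?thesis using less assms(1) by (subst last_nonzero_digit_coloring.simps) auto
  qed
qed

lemma last_nonzero_digit_coloring_mod:
  assumes "m \<ge> 2" "x mod m \<noteq> 0"
  shows "last_nonzero_digit_coloring m f x = f (x mod m)"
  using assms by (subst last_nonzero_digit_coloring.simps) auto

lemma last_nonzero_digit_coloring_mult:
  assumes "m \<ge> 2" "y \<noteq> 0"
  shows "last_nonzero_digit_coloring m f (m * y) = last_nonzero_digit_coloring m f y"
  using assms by (subst last_nonzero_digit_coloring.simps) auto

lemma dvd_step_if_monochromatic_last_nonzero_digit:
  assumes m2: "m \<ge> 2" and "0 < k" and f_range: "\<forall>x\<in>{1..<m}. f x < r"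
    and no_AP: "\<forall>c<r. no_nontriv_mono_AP_Zm m k (f(0 := c))"
    and mono: "monochromatic_AP (last_nonzero_digit_coloring m f) k a d"
  shows "m dvd d"
proof (rule ccontr)
  assume not_dvd: "\<not> m dvd d"
  let ?G = "last_nonzero_digit_coloring m f"
  define c where "c = ?G a"
  have "0 < r" using f_range m2 by force
  then have "c < r" unfolding c_def using last_nonzero_digit_coloring_less[OF f_range] by blast
  have same_color: "(f(0 := c)) ((a + i * d) mod m) = c" if "i < k" for i
  proof (cases "(a + i * d) mod m = 0")
    case False
    then have "(f(0 := c)) ((a + i * d) mod m) = ?G (a + i * d)"
      using last_nonzero_digit_coloring_mod[OF m2 False] by simp
    also have "\<dots> = ?G (a + 0 * d)"
      using mono that \<open>0 < k\<close> unfolding monochromatic_AP_def by blast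
    finally show ?thesis by (simp add: c_def)
  qed simp
  have "1 \<le> m" using m2 by simp
  from no_nontriv_mono_AP_ZmD[OF no_AP[rule_format, OF \<open>c < r\<close>] this not_dvd]
  obtain i j where "i < k" "j < k" "(f(0 := c)) ((a + i * d) mod m) \<noteq> (f(0 := c)) ((a + j * d) mod m)"
    by blast
  with same_color show False by simp
qed

lemma monochromatic_last_nonzero_digit_iff:
  assumes m2: "m \<ge> 2" and "0 < k" and "\<forall>x\<in>{1..<m}. f x < r"
    and "\<forall>c<r. no_nontriv_mono_AP_Zm m k (f(0 := c))" and "a \<noteq> 0"
  shows "monochromatic_AP (last_nonzero_digit_coloring m f) k a d \<longleftrightarrow>
         m dvd d \<and> (m dvd a \<longrightarrow> monochromatic_AP (last_nonzero_digit_coloring m f) k (a div m) (d div m))"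
proof (cases "m dvd d")
  case False
  then show ?thesis using dvd_step_if_monochromatic_last_nonzero_digit assms by blast
next
  case dvd_d: True
  let ?G = "last_nonzero_digit_coloring m f"
  show ?thesis
  proof (cases "m dvd a")
    case True
    then obtain s t where st: "a = m * s" "d = m * t" using dvd_d unfolding dvd_def by blast
    have "s \<noteq> 0" using \<open>a \<noteq> 0\<close> st by simp
    have "?G (a + i * d) = ?G (s + i * t)" for i
      using last_nonzero_digit_coloring_mult[OF m2, of "s + i * t" f] \<open>s \<noteq> 0\<close> st
      by (simp add: algebra_simps)
    then show ?thesis using True dvd_d st m2 by (simp add: monochromatic_AP_def)
  next
    case False
    have "?G (a + i * d) = f (a mod m)" for i
    proof -
      have "(a + i * d) mod m = a mod m" by (rule mod_add_mult_dvd[OF dvd_d])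
      moreover have "a mod m \<noteq> 0" using False by (simp add: dvd_eq_mod_eq_0)
      ultimately show ?thesis using last_nonzero_digit_coloring_mod[OF m2] by metis
    qed
    then show ?thesis using False dvd_d by (simp add: monochromatic_AP_def)
  qed
qed

lemma mono_AP_count_last_nonzero_digit_rec:
  assumes m2: "m \<ge> 2" and k2: "k \<ge> 2" and f_range: "\<forall>x\<in>{1..<m}. f x < r"
    and no_AP: "\<forall>c<r. no_nontriv_mono_AP_Zm m k (f(0 := c))"
  defines "G \<equiv> last_nonzero_digit_coloring m f"
  shows "mono_AP_count n k G + card (progressions (k - 1) (n div m))
       = card (progressions ((k - 1) * m) n) + mono_AP_count (n div m) k G"
proof -
  let ?P = "progressions (k - 1) n"
  define D where "D = {(a, d) \<in> ?P. m dvd d}"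
  define DD where "DD = {(a, d) \<in> ?P. m dvd a \<and> m dvd d}"
  define E where "E = {(a, d) \<in> ?P. m dvd a \<and> m dvd d \<and> monochromatic_AP G k (a div m) (d div m)}"
  have m1: "m \<ge> 1" using m2 by simp
  have split: "{(a, d) \<in> ?P. monochromatic_AP G k a d} = (D - DD) \<union> E"
    using monochromatic_last_nonzero_digit_iff[OF m2 _ f_range no_AP] k2
    unfolding D_def DD_def E_def G_def progressions_def by auto
  have "finite D"
    unfolding D_def by (rule finite_subset[OF _ finite_progressions]) (use k2 in auto)
  have "E \<subseteq> DD" "DD \<subseteq> D" unfolding D_def DD_def E_def by auto
  have "mono_AP_count n k G = card (D - DD) + card E"
    unfolding mono_AP_count_eq split using \<open>finite D\<close> \<open>E \<subseteq> DD\<close> \<open>DD \<subseteq> D\<close>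
    by (intro card_Un_disjoint) (auto intro: finite_subset)
  moreover have "card (D - DD) = card D - card DD"
    using \<open>finite D\<close> \<open>DD \<subseteq> D\<close> by (intro card_Diff_subset) (auto intro: finite_subset)
  moreover have "card DD \<le> card D" using \<open>finite D\<close> \<open>DD \<subseteq> D\<close> by (rule card_mono)
  moreover have "card D = card (progressions ((k - 1) * m) n)"
    unfolding D_def by (rule card_progressions_dvd_step[OF m1])
  moreover have "card DD = card (progressions (k - 1) (n div m))"
    using card_progressions_dilate[OF m1, of "k - 1" n "\<lambda>_ _. True"] unfolding DD_def by simp
  moreover have "card E = mono_AP_count (n div m) k G"
    unfolding E_def mono_AP_count_eq by (rule card_progressions_dilate[OF m1])
  ultimately show ?thesis by linarith
qed

text \<open>With \<open>T x = x\<^sup>2 / (2 (m + 1) K)\<close>, \<open>\<delta>\<close> is the amount by which \<open>T n - T (n div m)\<close> falls short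
  of the main term of the recurrence solved in \<open>digit_recurrence_bound\<close>.\<close>

lemma digit_recurrence_defect_bounds:
  fixes n q m K :: real
  assumes "m \<ge> 2" "K \<ge> 1" "0 \<le> q" "m * q \<le> n" "n \<le> m * q + m"
  defines "\<delta> \<equiv> n\<^sup>2 / (2 * K * m) - q\<^sup>2 / (2 * K) - (n\<^sup>2 / (2 * (m + 1) * K) - q\<^sup>2 / (2 * (m + 1) * K))"
  shows "0 \<le> \<delta>" and "\<delta> \<le> n"
proof -
  have \<delta>_eq: "\<delta> = (n - m * q) * (n + m * q) / (2 * K * m * (m + 1))"
  proof -
    define p where "p = m + 1"
    have "K \<noteq> 0" "m \<noteq> 0" "p \<noteq> 0" using assms(1,2) unfolding p_def by auto
    then have "\<delta> = (n\<^sup>2 * p - q\<^sup>2 * m * p + q\<^sup>2 * m - n\<^sup>2 * m) / (2 * K * m * p)"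
      unfolding \<delta>_def p_def[symmetric] by (simp add: field_simps)
    also have "n\<^sup>2 * p - q\<^sup>2 * m * p + q\<^sup>2 * m - n\<^sup>2 * m = (n - m * q) * (n + m * q)"
      unfolding p_def by (simp add: algebra_simps power2_eq_square)
    finally show ?thesis unfolding p_def .
  qed
  have "0 \<le> m * q" using assms by simp
  then have bounds: "0 \<le> n - m * q" "n - m * q \<le> m" "0 \<le> n + m * q" "n + m * q \<le> 2 * n"
    using assms(4,5) by linarith+
  have denom: "0 < 2 * K * m * (m + 1)" using assms(1,2) by simp
  have "(n - m * q) * (n + m * q) \<le> m * (2 * n)"
    using bounds by (intro mult_mono) auto
  also have "\<dots> \<le> n * (2 * K * m * (m + 1))"
  proof -
    have "1 \<le> K * (m + 1)" using assms(1,2) mult_mono[of 1 K 1 "m + 1"] by simp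
    moreover have "0 \<le> m * (2 * n)" using assms(1) bounds by simp
    ultimately have "m * (2 * n) * 1 \<le> m * (2 * n) * (K * (m + 1))" by (rule mult_left_mono)
    then show ?thesis by (simp add: ac_simps)
  qed
  finally have "(n - m * q) * (n + m * q) \<le> n * (2 * K * m * (m + 1))" .
  then show "\<delta> \<le> n" unfolding \<delta>_eq using denom by (simp only: divide_le_eq) simp
  show "0 \<le> \<delta>" using \<delta>_eq denom bounds by simp
qed

lemma digit_recurrence_bound:
  fixes N :: "nat \<Rightarrow> real" and K c :: real
  assumes m2: "m \<ge> 2" and K: "K \<ge> 1" and "c \<ge> 0" "N 0 = 0"
    and step: "\<And>n. \<bar>N n - N (n div m) - ((real n)\<^sup>2 / (2 * K * real m) - (real (n div m))\<^sup>2 / (2 * K))\<bar>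
                     \<le> c * real n"
  shows "\<bar>N n - (real n)\<^sup>2 / (2 * (real m + 1) * K)\<bar> \<le> 2 * (c + 1) * real n"
proof (induction n rule: less_induct)
  case (less n)
  show ?case
  proof (cases "n = 0")
    case True
    then show ?thesis using \<open>N 0 = 0\<close> by simp
  next
    case False
    define q where "q = n div m"
    have "q < n" unfolding q_def using False m2 by simp
    then have IH: "\<bar>N q - (real q)\<^sup>2 / (2 * (real m + 1) * K)\<bar> \<le> 2 * (c + 1) * real q"
      by (rule less)
    have "m * q + n mod m = n" "n mod m < m" unfolding q_def using m2 by simp_all
    then have "m * q \<le> n" "n \<le> m * q + m" by linarith+
    then have "real m * real q \<le> real n" "real n \<le> real m * real q + real m"
      by (simp_all only: of_nat_mult[symmetric] of_nat_add[symmetric] of_nat_le_iff)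
    from digit_recurrence_defect_bounds[OF _ K _ this] m2
    have defect:
      "0 \<le> (real n)\<^sup>2 / (2 * K * real m) - (real q)\<^sup>2 / (2 * K)
            - ((real n)\<^sup>2 / (2 * (real m + 1) * K) - (real q)\<^sup>2 / (2 * (real m + 1) * K))"
      "(real n)\<^sup>2 / (2 * K * real m) - (real q)\<^sup>2 / (2 * K)
            - ((real n)\<^sup>2 / (2 * (real m + 1) * K) - (real q)\<^sup>2 / (2 * (real m + 1) * K)) \<le> n"
      by simp_all
    have "2 * q \<le> n" using \<open>m * q \<le> n\<close> m2 by (meson le_trans mult_le_mono1)
    then have q_half: "2 * real q \<le> real n" by simp
    then have "2 * (c * real q) \<le> c * real n"
      using \<open>c \<ge> 0\<close> mult_left_mono[of "2 * real q" "real n" c] by simp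
    moreover have distrib: "2 * (c + 1) * real x = 2 * (c * real x) + 2 * real x" for x
      by (simp add: algebra_simps)
    ultimately show ?thesis
      using step[of n] IH defect q_half distrib[of n] distrib[of q]
      unfolding q_def[symmetric] abs_le_iff by linarith
  qed
qed

lemma mono_AP_count_last_nonzero_digit_approx:
  assumes m2: "m \<ge> 2" and k2: "k \<ge> 2" and "\<forall>x\<in>{1..<m}. f x < r"
    and "\<forall>c<r. no_nontriv_mono_AP_Zm m k (f(0 := c))"
  shows "\<bar>mono_AP_count n k (last_nonzero_digit_coloring m f)
           - (real n)\<^sup>2 / (2 * (real m + 1) * (real k - 1))\<bar> \<le> 10 * real n"
proof -
  define N where "N n = real (mono_AP_count n k (last_nonzero_digit_coloring m f))" for n
  have K: "real (k - 1) = real k - 1" using k2 by (simp add: of_nat_diff)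
  have "N 0 = 0" unfolding N_def mono_AP_count_eq by simp
  have "\<bar>N n - N (n div m) - ((real n)\<^sup>2 / (2 * (real k - 1) * real m)
          - (real (n div m))\<^sup>2 / (2 * (real k - 1)))\<bar> \<le> 4 * real n" for n
  proof -
    have "real (mono_AP_count n k (last_nonzero_digit_coloring m f) + card (progressions (k - 1) (n div m)))
        = real (card (progressions ((k - 1) * m) n) + mono_AP_count (n div m) k (last_nonzero_digit_coloring m f))"
      by (simp only: mono_AP_count_last_nonzero_digit_rec[OF assms])
    then have "N n - N (n div m)
        = card (progressions ((k - 1) * m) n) - real (card (progressions (k - 1) (n div m)))"
      unfolding N_def of_nat_add by linarith
    moreover have "\<bar>card (progressions ((k - 1) * m) n) - (real n)\<^sup>2 / (2 * (real k - 1) * real m)\<bar> \<le> 2 * real n"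
    proof -
      have "(k - 1) * m \<ge> 1" using assms by simp
      moreover have "2 * real ((k - 1) * m) = 2 * (real k - 1) * real m" using K by simp
      ultimately show ?thesis using card_progressions_approx by metis
    qed
    moreover have "\<bar>card (progressions (k - 1) (n div m)) - (real (n div m))\<^sup>2 / (2 * (real k - 1))\<bar>
                   \<le> 2 * real (n div m)"
      using card_progressions_approx[of "k - 1" "n div m"] k2 K by simp
    moreover have "real (n div m) \<le> real n" by simp
    ultimately show ?thesis unfolding abs_le_iff by linarith
  qed
  from digit_recurrence_bound[OF m2 _ _ \<open>N 0 = 0\<close> this] k2 show ?thesis
    unfolding N_def by simp
qed

theorem mainTheorem2:
  fixes r k m :: nat
  assumes "r \<ge> 2" and "k \<ge> 3" and "m \<ge> 2"
  shows "((\<exists>f. (\<forall>x<m. f x < r) \<and> no_nontriv_mono_AP_Zm m k f) \<longrightarrow>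
           (\<exists>C::real. \<forall>n::nat. \<exists>g. (\<forall>x\<in>{1..n}. g x < r) \<and>
              \<bar>real (mono_AP_count n k g) - (real n)^2 / (2 * real m * (real k - 1))\<bar> \<le> C * real n))
       \<and> ((\<exists>f. (\<forall>x\<in>{1..<m}. f x < r) \<and> (\<forall>c<r. no_nontriv_mono_AP_Zm m k (f(0 := c)))) \<longrightarrow>
           (\<exists>C::real. \<forall>n::nat. \<exists>g. (\<forall>x\<in>{1..n}. g x < r) \<and>
              \<bar>real (mono_AP_count n k g) - (real n)^2 / (2 * (real m + 1) * (real k - 1))\<bar> \<le> C * real n))"
proof -
  have "m \<ge> 1" "k \<ge> 2" using assms by simp_all
  show ?thesis
  proof (intro conjI impI)
    assume "\<exists>f. (\<forall>x<m. f x < r) \<and> no_nontriv_mono_AP_Zm m k f"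
    then obtain f where f_range: "\<forall>x<m. f x < r" and no_AP: "no_nontriv_mono_AP_Zm m k f" by blast
    have "\<forall>x\<in>{1..n}. f (x mod m) < r" for n using f_range \<open>m \<ge> 1\<close> by simp
    then show "\<exists>C::real. \<forall>n. \<exists>g. (\<forall>x\<in>{1..n}. g x < r) \<and>
        \<bar>real (mono_AP_count n k g) - (real n)^2 / (2 * real m * (real k - 1))\<bar> \<le> C * real n"
      using mono_AP_count_mod_coloring_approx[OF no_AP \<open>m \<ge> 1\<close> \<open>k \<ge> 2\<close>]
      by (intro exI[of _ 2] allI exI[of _ "\<lambda>x. f (x mod m)"] conjI) simp_all
  next
    assume "\<exists>f. (\<forall>x\<in>{1..<m}. f x < r) \<and> (\<forall>c<r. no_nontriv_mono_AP_Zm m k (f(0 := c)))"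
    then obtain f where f_range: "\<forall>x\<in>{1..<m}. f x < r"
      and no_AP: "\<forall>c<r. no_nontriv_mono_AP_Zm m k (f(0 := c))" by blast
    have "\<forall>x\<in>{1..n}. last_nonzero_digit_coloring m f x < r" for n
      using last_nonzero_digit_coloring_less[OF f_range] assms(1) by simp
    then show "\<exists>C::real. \<forall>n. \<exists>g. (\<forall>x\<in>{1..n}. g x < r) \<and>
        \<bar>real (mono_AP_count n k g) - (real n)^2 / (2 * (real m + 1) * (real k - 1))\<bar> \<le> C * real n"
      using mono_AP_count_last_nonzero_digit_approx[OF assms(3) \<open>k \<ge> 2\<close> f_range no_AP]
      by (intro exI[of _ 10] allI exI[of _ "last_nonzero_digit_coloring m f"] conjI) simp_all
  qed
qed

end
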